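(* Let $\mathcal{R}>0$, $\alpha>0$, $\beta>0$ be fixed, and let $\bar\gamma_{\mathrm{D}}>0$ with $\bar\gamma_{\mathrm{R}}=\alpha\bar\gamma_{\mathrm{D}}$ and $\bar\gamma_{\mathrm{E}}=\bar\gamma_{\mathrm{R}}/\beta$. Let $h_{\mathrm{S},\mathrm{R}},h_{\mathrm{R},\mathrm{D}},h_{\mathrm{R},\mathrm{E}}$ be independent $\mathcal{CN}(0,1)$ random variables, and define $$\mathcal{R}^{1}_{\mathrm{R}\to\mathrm{D}}=\max\left\{\log_2\frac{1+\bar\gamma_{\mathrm{D}}|h_{\mathrm{R},\mathrm{D}}|^2}{1+\bar\gamma_{\mathrm{E}}|h_{\mathrm{R},\mathrm{E}}|^2},0\right\},\qquad \mathcal{R}^{1}_{\mathrm{S}\to\mathrm{R}}=\log_2\left(1+\bar\gamma_{\mathrm{R}}|h_{\mathrm{S},\mathrm{R}}|^2\right),$$ $\mathcal{R}_1=\max\{\min\{\mathcal{R}^{1}_{\mathrm{R}\to\mathrm{D}},\mathcal{R}^{1}_{\mathrm{S}\to\mathrm{R}}\},0\}$ and $\mathcal{P}_1=\Pr(\mathcal{R}_1<\mathcal{R})$. Then as $\bar\gamma_{\mathrm{D}}\to\infty$, $$\mathcal{P}_1\approx\mathcal{P}_1^{\lim}+\hat{\mathcal{M}}_1\bar\gamma_{\mathrm{D}}^{-1},$$ in the sense that $\mathcal{P}_1\to\mathcal{P}_1^{\lim}$ and $\bar\gamma_{\mathrm{D}}(\mathcal{P}_1-\mathcal{P}_1^{\lim})\to\hat{\mathcal{M}}_1$,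 where $$\mathcal{P}_1^{\lim}=1-\frac{1}{1+\frac{\alpha}{\beta}2^{\mathcal{R}}},\qquad \hat{\mathcal{M}}_1=\frac{(2^{\mathcal{R}}-1)(1+1/\alpha)}{1+\frac{\alpha}{\beta}2^{\mathcal{R}}}.$$
   Context: $\mathcal{CN}(0,1)$ denotes a circularly symmetric complex Gaussian random variable with zero mean and unit variance (Rayleigh fading). The quantities model a decode-and-forward relay system where the eavesdropper overhears only the relay; $\bar\gamma$'s are average SNRs, $\mathcal{R}_1$ the secrecy capacity and $\mathcal{P}_1$ the secrecy outage probability. *)

theory Defs
  imports "HOL-Probability.Probability"
begin

definition CN01_density :: "complex \<Rightarrow> ennreal" where
  "CN01_density z = ennreal (exp (- (cmod z)\<^sup>2) / pi)"

text \<open>Secrecy rate of the relay-to-destination hop (gD = average SNR at D, a = alpha, b = beta,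
  so gR = a*gD and gE = gR/b).\<close>
definition R_RD :: "real \<Rightarrow> real \<Rightarrow> real \<Rightarrow> complex \<Rightarrow> complex \<Rightarrow> real" where
  "R_RD a b gD hRD hRE =
     max (log 2 ((1 + gD * (cmod hRD)\<^sup>2) / (1 + (a * gD / b) * (cmod hRE)\<^sup>2))) 0"

definition R_SR :: "real \<Rightarrow> real \<Rightarrow> complex \<Rightarrow> real" where
  "R_SR a gD hSR = log 2 (1 + a * gD * (cmod hSR)\<^sup>2)"

definition R1 :: "real \<Rightarrow> real \<Rightarrow> real \<Rightarrow> complex \<Rightarrow> complex \<Rightarrow> complex \<Rightarrow> real" where
  "R1 a b gD hSR hRD hRE = max (min (R_RD a b gD hRD hRE) (R_SR a gD hSR)) 0"

text \<open>Secrecy outage probability; channel h 0 = h_{S,R}, h 1 = h_{R,D}, h 2 = h_{R,E}.\<close>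
definition P1 :: "'w measure \<Rightarrow> (nat \<Rightarrow> 'w \<Rightarrow> complex) \<Rightarrow> real \<Rightarrow> real \<Rightarrow> real \<Rightarrow> real \<Rightarrow> real" where
  "P1 M h a b Rt gD = measure M {\<omega> \<in> space M. R1 a b gD (h 0 \<omega>) (h 1 \<omega>) (h 2 \<omega>) < Rt}"

definition P1_lim :: "real \<Rightarrow> real \<Rightarrow> real \<Rightarrow> real" where
  "P1_lim a b Rt = 1 - 1 / (1 + (a / b) * 2 powr Rt)"

definition M1_hat :: "real \<Rightarrow> real \<Rightarrow> real \<Rightarrow> real" where
  "M1_hat a b Rt = (2 powr Rt - 1) * (1 + 1 / a) / (1 + (a / b) * 2 powr Rt)"

end

theory Submission
  imports Defs "HOL-Real_Asymp.Real_Asymp"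
begin

text \<open>For \<open>h \<sim> CN(0,1)\<close> the power \<open>|h|\<^sup>2\<close> is standard exponential, as a layer-cake computation
  of the Gaussian mass of a disc shows. Writing \<open>X\<^sub>i = |h\<^sub>i|\<^sup>2\<close> and \<open>t = 2 powr R\<close>, there is no outage
  exactly when \<open>X\<^sub>0 \<ge> (t - 1)/(\<alpha> \<gamma>)\<close> and \<open>X\<^sub>1 \<ge> (t - 1)/\<gamma> + (\<alpha> t/\<beta>) X\<^sub>2\<close>. By independence
  these events have probabilities \<open>exp (-(t - 1)/(\<alpha> \<gamma>))\<close> and, integrating over \<open>X\<^sub>2\<close>,
  \<open>exp (-(t - 1)/\<gamma>) / (1 + \<alpha> t/\<beta>)\<close>. Hence \<open>P\<^sub>1 = 1 - exp (-k/\<gamma>) / c\<close> exactly, with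
  \<open>k = (t - 1)(1 + 1/\<alpha>)\<close> and \<open>c = 1 + \<alpha> t/\<beta>\<close>, and the expansion is that of \<open>exp (-k/\<gamma>)\<close>.\<close>

lemma norm_le_sqrt_iff: "norm x \<le> sqrt t \<longleftrightarrow> (norm x)\<^sup>2 \<le> t"
  by (metis abs_norm_cancel real_le_rsqrt sqrt_ge_absD)

lemma emeasure_cball_complex: "0 \<le> r \<Longrightarrow> emeasure lborel (cball (0::complex) r) = ennreal (pi * r\<^sup>2)"
  by (simp add: emeasure_cball eval_unit_ball_vol)

lemma exp_neg_norm_sq_layer_cake:
  fixes z :: complex
  assumes "0 \<le> a"
  shows "ennreal (exp (- (cmod z)\<^sup>2)) * indicator (cball 0 (sqrt a)) z
       = ennreal (exp (- a)) * indicator (cball 0 (sqrt a)) z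
         + (\<integral>\<^sup>+t. ennreal (exp (- t)) * indicator {0..a} t * indicator (cball 0 (sqrt t)) z \<partial>lborel)"
proof (cases "z \<in> cball 0 (sqrt a)")
  case True
  then have za: "(cmod z)\<^sup>2 \<le> a" by (simp add: norm_le_sqrt_iff)
  have "(\<integral>\<^sup>+t. ennreal (exp (- t)) * indicator {0..a} t * indicator (cball 0 (sqrt t)) z \<partial>lborel)
      = (\<integral>\<^sup>+t. ennreal (exp (- t)) * indicator {(cmod z)\<^sup>2..a} t \<partial>lborel)"
    by (intro nn_integral_cong)
      (auto simp: indicator_def norm_le_sqrt_iff dest: order_trans[OF zero_le_power2[of "cmod z"]])
  also have "\<dots> = ennreal (exp (- (cmod z)\<^sup>2) - exp (- a))"
    using za by (subst nn_integral_FTC_Icc[where F = "\<lambda>t. - exp (- t)"])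
      (auto intro!: derivative_eq_intros)
  finally show ?thesis
    using True za by (simp add: ennreal_plus[symmetric] del: ennreal_plus)
next
  case False
  then show ?thesis
    by (simp add: nn_integral_zero' indicator_def norm_le_sqrt_iff)
qed

lemma nn_integral_exp_neg_norm_sq_cball:
  assumes "0 \<le> a"
  shows "(\<integral>\<^sup>+z. ennreal (exp (- (cmod z)\<^sup>2)) * indicator (cball 0 (sqrt a)) z \<partial>lborel)
       = ennreal (pi * (1 - exp (- a)))"
proof -
  let ?F = "\<lambda>(z::complex) (t::real). ennreal (exp (- t)) * indicator {0..a} t * indicator (cball 0 (sqrt t)) z"
  have [measurable]: "case_prod ?F \<in> borel_measurable (lborel \<Otimes>\<^sub>M lborel)"
    unfolding indicator_def mem_cball by measurable
  have [measurable]: "cball (0::complex) (sqrt a) \<in> sets borel"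
    by (simp add: borel_closed)
  have slice: "(\<integral>\<^sup>+z. ?F z t \<partial>lborel) = ennreal (pi * t * exp (- t)) * indicator {0..a} t" for t
    by (cases "t \<in> {0..a}")
      (auto simp: nn_integral_cmult_indicator emeasure_cball_complex ennreal_mult[symmetric] mult_ac)
  have "(\<integral>\<^sup>+z. ennreal (exp (- (cmod z)\<^sup>2)) * indicator (cball 0 (sqrt a)) z \<partial>lborel)
      = (\<integral>\<^sup>+z. ennreal (exp (- a)) * indicator (cball (0::complex) (sqrt a)) z \<partial>lborel)
        + (\<integral>\<^sup>+z. (\<integral>\<^sup>+t. ?F z t \<partial>lborel) \<partial>lborel)"
    unfolding exp_neg_norm_sq_layer_cake[OF assms]
    by (subst nn_integral_add) (auto intro!: lborel.borel_measurable_nn_integral)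
  also have "(\<integral>\<^sup>+z. (\<integral>\<^sup>+t. ?F z t \<partial>lborel) \<partial>lborel) = (\<integral>\<^sup>+t. (\<integral>\<^sup>+z. ?F z t \<partial>lborel) \<partial>lborel)"
    by (rule lborel_pair.Fubini'[symmetric]) measurable
  also have "\<dots> = (\<integral>\<^sup>+t. ennreal (pi * t * exp (- t)) * indicator {0..a} t \<partial>lborel)"
    by (simp only: slice)
  also have "\<dots> = ennreal (pi - pi * (a + 1) * exp (- a))"
    using assms
    by (subst nn_integral_FTC_Icc[where F = "\<lambda>t. - pi * (t + 1) * exp (- t)"])
      (auto intro!: derivative_eq_intros simp: algebra_simps)
  also have "(\<integral>\<^sup>+z. ennreal (exp (- a)) * indicator (cball (0::complex) (sqrt a)) z \<partial>lborel)
      = ennreal (exp (- a) * (pi * a))"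
    using assms by (simp add: nn_integral_cmult emeasure_cball_complex ennreal_mult)
  also have "ennreal (exp (- a) * (pi * a)) + ennreal (pi - pi * (a + 1) * exp (- a))
      = ennreal (pi * (1 - exp (- a)))"
  proof -
    have "(a + 1) * exp (- a) \<le> 1"
      using exp_ge_add_one_self[of a] by (simp add: exp_minus field_simps)
    then have "pi * ((a + 1) * exp (- a)) \<le> pi"
      by (simp add: mult_left_le)
    then show ?thesis
      using assms by (subst ennreal_plus[symmetric]) (auto simp: algebra_simps)
  qed
  finally show ?thesis .
qed

lemma distributed_CN01_norm_sq:
  assumes "distributed M lborel h CN01_density"
  shows "distributed M lborel (\<lambda>\<omega>. (cmod (h \<omega>))\<^sup>2) (exponential_density 1)"
proof (rule exponential_distributedI)
  have [measurable]: "h \<in> borel_measurable M"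
    using assms by (simp add: distributed_def)
  show "(\<lambda>\<omega>. (cmod (h \<omega>))\<^sup>2) \<in> borel_measurable M"
    by measurable
  fix a :: real
  assume a: "0 \<le> a"
  have [measurable]: "cball (0::complex) (sqrt a) \<in> sets borel"
    by (simp add: borel_closed)
  have "{\<omega> \<in> space M. (cmod (h \<omega>))\<^sup>2 \<le> a} = h -` cball 0 (sqrt a) \<inter> space M"
    by (auto simp: norm_le_sqrt_iff)
  then have "emeasure M {\<omega> \<in> space M. (cmod (h \<omega>))\<^sup>2 \<le> a}
      = (\<integral>\<^sup>+z. CN01_density z * indicator (cball 0 (sqrt a)) z \<partial>lborel)"
    by (simp add: distributed_emeasure[OF assms])
  also have "\<dots> = ennreal (1 / pi) * (\<integral>\<^sup>+z. ennreal (exp (- (cmod z)\<^sup>2)) * indicator (cball 0 (sqrt a)) z \<partial>lborel)"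
    by (subst nn_integral_cmult[symmetric])
      (auto intro!: nn_integral_cong simp: CN01_density_def divide_inverse ennreal_mult mult_ac)
  also have "\<dots> = 1 - ennreal (exp (- a * 1))"
    using a ennreal_minus[of "exp (- a)" 1]
    by (simp add: nn_integral_exp_neg_norm_sq_cball ennreal_mult[symmetric])
  finally show "emeasure M {\<omega> \<in> space M. (cmod (h \<omega>))\<^sup>2 \<le> a} = 1 - ennreal (exp (- a * 1))" .
qed simp

lemma nn_integral_exponential_density_atLeast:
  assumes "0 < l" and "0 \<le> c"
  shows "(\<integral>\<^sup>+x. ennreal (exponential_density l x) * indicator {c..} x \<partial>lborel) = ennreal (exp (- c * l))"
proof -
  have lim: "((\<lambda>x. - exp (- x * l)) \<longlongrightarrow> 0) at_top"
    using \<open>0 < l\<close> by real_asymp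
  have "(\<integral>\<^sup>+x. ennreal (exponential_density l x) * indicator {c..} x \<partial>lborel)
      = (\<integral>\<^sup>+x. ennreal (l * exp (- x * l)) * indicator {c..} x \<partial>lborel)"
    using \<open>0 \<le> c\<close> by (intro nn_integral_cong) (auto simp: exponential_density_def indicator_def)
  also have "\<dots> = ennreal (0 - - exp (- c * l))"
    by (rule nn_integral_FTC_atLeast[OF _ _ _ lim])
      (use \<open>0 < l\<close> in \<open>auto intro!: derivative_eq_intros\<close>)
  finally show ?thesis
    by simp
qed

lemma (in prob_space) prob_exponential_ge:
  assumes "distributed M lborel X (exponential_density l)" and "0 < l" and "0 \<le> c"
  shows "\<P>(\<omega> in M. c \<le> X \<omega>) = exp (- c * l)"
proof -
  have "emeasure M {\<omega> \<in> space M. c \<le> X \<omega>} = emeasure M (X -` {c..} \<inter> space M)"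
    by (intro arg_cong[where f = "emeasure M"]) auto
  also have "\<dots> = ennreal (exp (- c * l))"
    using assms by (simp add: distributed_emeasure nn_integral_exponential_density_atLeast)
  finally show ?thesis
    by (simp add: emeasure_eq_measure)
qed

lemma (in prob_space) prob_exponential_linear_le:
  assumes DZ: "distributed M lborel Z (exponential_density l)"
    and DX: "distributed M lborel X (exponential_density m)"
    and indep: "indep_var borel Z borel X"
    and "0 < l" "0 < m" "0 \<le> v" "0 \<le> w"
  shows "\<P>(\<omega> in M. v + w * Z \<omega> \<le> X \<omega>) = exp (- v * m) * l / (l + w * m)"
proof -
  let ?f = "\<lambda>l x. ennreal (exponential_density l x)"
  let ?S = "{p :: real \<times> real. v + w * fst p \<le> snd p}"
  have "?S = {p \<in> space (borel \<Otimes>\<^sub>M borel). v + w * fst p \<le> snd p}"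
    by (simp add: space_pair_measure)
  also have "\<dots> \<in> sets (borel \<Otimes>\<^sub>M borel)"
    by measurable
  finally have S: "?S \<in> sets (borel \<Otimes>\<^sub>M borel)" .
  have [measurable]: "Z \<in> borel_measurable M" "X \<in> borel_measurable M"
    using DZ DX by (simp_all add: distributed_def)
  have distr_borel: "distr M borel Y = distr M lborel Y" for Y :: "'a \<Rightarrow> real"
    by (rule distr_cong) simp_all
  have joint: "distr M (borel \<Otimes>\<^sub>M borel) (\<lambda>\<omega>. (Z \<omega>, X \<omega>)) = density lborel (?f l) \<Otimes>\<^sub>M density lborel (?f m)"
    using indep DZ DX by (simp add: indep_var_distribution_eq distributed_def distr_borel)
  interpret Exp_m: prob_space "density lborel (?f m)"
    using \<open>0 < m\<close> by (rule prob_space_exponential_density)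
  have rate_pos: "0 < l + w * m"
    using assms by (intro add_pos_nonneg mult_nonneg_nonneg) auto
  have slice: "?f l z * emeasure (density lborel (?f m)) (Pair z -` ?S)
      = ennreal (exp (- v * m) * l / (l + w * m)) * (?f (l + w * m) z * indicator {0..} z)" for z
  proof (cases "0 \<le> z")
    case True
    have "Pair z -` ?S = {v + w * z..}"
      by auto
    then have "emeasure (density lborel (?f m)) (Pair z -` ?S) = ennreal (exp (- (v + w * z) * m))"
      using True assms by (simp add: emeasure_density nn_integral_exponential_density_atLeast)
    moreover have "l * exp (- z * l) * exp (- (v + w * z) * m)
        = exp (- v * m) * l / (l + w * m) * ((l + w * m) * exp (- z * (l + w * m)))"
      using rate_pos by (simp add: mult_exp_exp field_simps)
    ultimately show ?thesis
      using True assms by (simp add: exponential_density_def ennreal_mult[symmetric])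
  qed (simp add: exponential_density_def)
  have "emeasure M {\<omega> \<in> space M. v + w * Z \<omega> \<le> X \<omega>} = emeasure (distr M (borel \<Otimes>\<^sub>M borel) (\<lambda>\<omega>. (Z \<omega>, X \<omega>))) ?S"
    using S by (subst emeasure_distr) (auto intro!: arg_cong[where f = "emeasure M"])
  also have "\<dots> = (\<integral>\<^sup>+z. emeasure (density lborel (?f m)) (Pair z -` ?S) \<partial>density lborel (?f l))"
    unfolding joint using S by (intro Exp_m.emeasure_pair_measure_alt) simp
  also have "\<dots> = (\<integral>\<^sup>+z. ?f l z * emeasure (density lborel (?f m)) (Pair z -` ?S) \<partial>lborel)"
    by (rule nn_integral_density) auto
  also have "\<dots> = (\<integral>\<^sup>+z. ennreal (exp (- v * m) * l / (l + w * m)) * (?f (l + w * m) z * indicator {0..} z) \<partial>lborel)"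
    by (simp only: slice)
  also have "\<dots> = ennreal (exp (- v * m) * l / (l + w * m))"
    using rate_pos by (simp add: nn_integral_cmult nn_integral_exponential_density_atLeast)
  finally show ?thesis
    using assms by (simp add: emeasure_eq_measure)
qed

lemma (in prob_space) prob_indep_component_pair:
  assumes "indep_vars (\<lambda>_. N) X I" and "i \<in> I" "j \<in> I" "k \<in> I" and "i \<noteq> j" "i \<noteq> k"
    and [measurable]: "Measurable.pred N P" "Measurable.pred (N \<Otimes>\<^sub>M N) Q"
  shows "\<P>(\<omega> in M. P (X i \<omega>) \<and> Q (X j \<omega>, X k \<omega>))
       = \<P>(\<omega> in M. P (X i \<omega>)) * \<P>(\<omega> in M. Q (X j \<omega>, X k \<omega>))"
proof -
  have "indep_var (PiM {i} (\<lambda>_. N)) (\<lambda>\<omega>. restrict (\<lambda>n. X n \<omega>) {i})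
      (PiM {j, k} (\<lambda>_. N)) (\<lambda>\<omega>. restrict (\<lambda>n. X n \<omega>) {j, k})"
    using assms by (intro indep_var_restrict) auto
  \<comment> \<open>\<open>indep_var\<close> needs both variables in one space, so pass to the two indicator events.\<close>
  then have "indep_var (count_space UNIV) ((\<lambda>f. P (f i)) \<circ> (\<lambda>\<omega>. restrict (\<lambda>n. X n \<omega>) {i}))
      (count_space UNIV) ((\<lambda>f. Q (f j, f k)) \<circ> (\<lambda>\<omega>. restrict (\<lambda>n. X n \<omega>) {j, k}))"
    by (rule indep_var_compose) measurable
  then have "indep_var (count_space UNIV) (\<lambda>\<omega>. P (X i \<omega>)) (count_space UNIV) (\<lambda>\<omega>. Q (X j \<omega>, X k \<omega>))"
    by (simp add: comp_def)
  from prob_indep_random_variable[OF this, of "{True}" "{True}"] show ?thesis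
    by simp
qed

lemma (in prob_space) indep_var_components:
  assumes "indep_vars (\<lambda>_. N) X I" and "j \<in> I" "k \<in> I" and "j \<noteq> k"
  shows "indep_var N (X j) N (X k)"
proof -
  have "indep_var (PiM {j} (\<lambda>_. N)) (\<lambda>\<omega>. restrict (\<lambda>n. X n \<omega>) {j})
      (PiM {k} (\<lambda>_. N)) (\<lambda>\<omega>. restrict (\<lambda>n. X n \<omega>) {k})"
    using assms by (intro indep_var_restrict) auto
  then have "indep_var N ((\<lambda>f. f j) \<circ> (\<lambda>\<omega>. restrict (\<lambda>n. X n \<omega>) {j}))
      N ((\<lambda>f. f k) \<circ> (\<lambda>\<omega>. restrict (\<lambda>n. X n \<omega>) {k}))"
    by (rule indep_var_compose) measurable
  then show ?thesis
    by (simp add: comp_def)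
qed

lemma R_SR_less_iff:
  assumes "0 < a" "0 < g"
  shows "R_SR a g z < Rt \<longleftrightarrow> (cmod z)\<^sup>2 < (2 powr Rt - 1) / (a * g)"
proof -
  have "0 < 1 + a * g * (cmod z)\<^sup>2"
    using assms by (simp add: add_pos_nonneg)
  then have "R_SR a g z < Rt \<longleftrightarrow> 1 + a * g * (cmod z)\<^sup>2 < 2 powr Rt"
    by (simp add: R_SR_def log_less_iff)
  also have "\<dots> \<longleftrightarrow> (cmod z)\<^sup>2 < (2 powr Rt - 1) / (a * g)"
    using assms by (simp add: field_simps)
  finally show ?thesis .
qed

lemma R_RD_less_iff:
  assumes "0 < Rt" "0 < a" "0 < b" "0 < g"
  shows "R_RD a b g z1 z2 < Rt \<longleftrightarrow>
    (cmod z1)\<^sup>2 < (2 powr Rt - 1) / g + 2 powr Rt * a / b * (cmod z2)\<^sup>2"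
proof -
  have pos1: "0 < 1 + g * (cmod z1)\<^sup>2" and pos2: "0 < 1 + a * g / b * (cmod z2)\<^sup>2"
    using assms by (simp_all add: add_pos_nonneg)
  have "R_RD a b g z1 z2 < Rt \<longleftrightarrow> log 2 ((1 + g * (cmod z1)\<^sup>2) / (1 + a * g / b * (cmod z2)\<^sup>2)) < Rt"
    using \<open>0 < Rt\<close> by (simp add: R_RD_def)
  also have "\<dots> \<longleftrightarrow> 1 + g * (cmod z1)\<^sup>2 < 2 powr Rt * (1 + a * g / b * (cmod z2)\<^sup>2)"
    using pos1 pos2 by (simp add: log_less_iff divide_less_eq)
  also have "\<dots> \<longleftrightarrow> (cmod z1)\<^sup>2 < (2 powr Rt - 1) / g + 2 powr Rt * a / b * (cmod z2)\<^sup>2"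
    using assms by (simp add: field_simps)
  finally show ?thesis .
qed

lemma R1_less_iff:
  assumes "0 < Rt" "0 < a" "0 < b" "0 < g"
  shows "R1 a b g z0 z1 z2 < Rt \<longleftrightarrow>
    (cmod z0)\<^sup>2 < (2 powr Rt - 1) / (a * g)
    \<or> (cmod z1)\<^sup>2 < (2 powr Rt - 1) / g + 2 powr Rt * a / b * (cmod z2)\<^sup>2"
  unfolding R_SR_less_iff[OF assms(2,4), symmetric] R_RD_less_iff[OF assms, symmetric]
  using \<open>0 < Rt\<close> by (auto simp: R1_def)

lemma P1_closed_form:
  assumes "prob_space M"
    and "0 < Rt" "0 < a" "0 < b" "0 < g"
    and "\<And>i. i \<in> {0, 1, 2} \<Longrightarrow> distributed M lborel (h i) CN01_density"
    and "prob_space.indep_vars M (\<lambda>_. borel) h {0, 1, 2}"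
  shows "P1 M h a b Rt g = 1 - exp (- ((2 powr Rt - 1) * (1 + 1 / a)) / g) / (1 + a / b * 2 powr Rt)"
proof -
  interpret prob_space M
    by (rule assms(1))
  define X where "X i \<omega> = (cmod (h i \<omega>))\<^sup>2" for i \<omega>
  define u where "u = (2 powr Rt - 1) / (a * g)"
  define v where "v = (2 powr Rt - 1) / g"
  define w where "w = 2 powr Rt * a / b"
  have "1 \<le> 2 powr Rt"
    using assms by (intro ge_one_powr_ge_zero) auto
  then have uvw: "0 \<le> u" "0 \<le> v" "0 \<le> w"
    using assms by (simp_all add: u_def v_def w_def)
  have DX: "distributed M lborel (X i) (exponential_density 1)" if "i \<in> {0, 1, 2}" for i
    unfolding X_def by (rule distributed_CN01_norm_sq[OF assms(6)[OF that]])
  have [measurable]: "X i \<in> borel_measurable M" if "i \<in> {0, 1, 2}" for i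
    using DX[OF that] by (simp add: distributed_def)
  have IX: "indep_vars (\<lambda>_. borel) X {0, 1, 2}"
    unfolding X_def by (rule indep_vars_compose2[OF assms(7)]) measurable
  have "P1 M h a b Rt g = 1 - \<P>(\<omega> in M. u \<le> X 0 \<omega> \<and> v + w * X 2 \<omega> \<le> X 1 \<omega>)"
  proof -
    have "{\<omega> \<in> space M. R1 a b g (h 0 \<omega>) (h 1 \<omega>) (h 2 \<omega>) < Rt}
        = space M - {\<omega> \<in> space M. u \<le> X 0 \<omega> \<and> v + w * X 2 \<omega> \<le> X 1 \<omega>}"
      using R1_less_iff[OF assms(2-5)] by (auto simp: X_def u_def v_def w_def)
    moreover have "{\<omega> \<in> space M. u \<le> X 0 \<omega> \<and> v + w * X 2 \<omega> \<le> X 1 \<omega>} \<in> events"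
      by measurable
    ultimately show ?thesis
      by (simp add: P1_def prob_compl)
  qed
  also have "\<P>(\<omega> in M. u \<le> X 0 \<omega> \<and> v + w * X 2 \<omega> \<le> X 1 \<omega>)
      = \<P>(\<omega> in M. u \<le> X 0 \<omega>) * \<P>(\<omega> in M. v + w * X 2 \<omega> \<le> X 1 \<omega>)"
    using prob_indep_component_pair[OF IX, of 0 2 1 "\<lambda>x. u \<le> x" "\<lambda>p. v + w * fst p \<le> snd p"]
    by simp
  also have "\<dots> = exp (- u) * (exp (- v) / (1 + w))"
    using uvw prob_exponential_ge[OF DX, of 0 u] indep_var_components[OF IX, of 2 1]
      prob_exponential_linear_le[OF DX DX, of 2 1 v w]
    by simp
  also have "\<dots> = exp (- ((2 powr Rt - 1) * (1 + 1 / a)) / g) / (1 + a / b * 2 powr Rt)"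
    using assms by (simp add: u_def v_def w_def mult_exp_exp field_simps)
  finally show ?thesis .
qed

lemma exp_neg_div_expansion_at_top:
  fixes f :: "real \<Rightarrow> real"
  assumes "c \<noteq> 0" and "\<forall>\<^sub>F x in at_top. f x = 1 - exp (- k / x) / c"
  shows "(f \<longlongrightarrow> 1 - 1 / c) at_top \<and> ((\<lambda>x. x * (f x - (1 - 1 / c))) \<longlongrightarrow> k / c) at_top"
proof -
  have scaled_gap: "x * ((1 - exp (- k / x) / c) - (1 - 1 / c)) = x * (1 - exp (- k / x)) / c" for x
    using \<open>c \<noteq> 0\<close> by (simp add: field_simps)
  have "((\<lambda>x. exp (- k / x)) \<longlongrightarrow> 1) at_top"
    and "((\<lambda>x. x * (1 - exp (- k / x))) \<longlongrightarrow> k) at_top"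
    by real_asymp+
  then have "((\<lambda>x. 1 - exp (- k / x) / c) \<longlongrightarrow> 1 - 1 / c) at_top"
    and "((\<lambda>x. x * (1 - exp (- k / x)) / c) \<longlongrightarrow> k / c) at_top"
    using \<open>c \<noteq> 0\<close> by (auto intro!: tendsto_diff tendsto_divide)
  moreover have "\<forall>\<^sub>F x in at_top. x * (f x - (1 - 1 / c)) = x * (1 - exp (- k / x)) / c"
    using assms(2) by eventually_elim (simp only: scaled_gap)
  ultimately show ?thesis
    using assms(2) by (simp add: tendsto_cong)
qed

theorem theorem3:
  fixes M :: "'w measure" and h :: "nat \<Rightarrow> 'w \<Rightarrow> complex"
    and a b Rt :: real
  assumes "prob_space M"
    and "Rt > 0" and "a > 0" and "b > 0"
    and "\<And>i. i \<in> {0, 1, 2} \<Longrightarrow> distributed M lborel (h i) CN01_density"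
    and "prob_space.indep_vars M (\<lambda>_. borel) h {0, 1, 2}"
  shows "(P1 M h a b Rt \<longlongrightarrow> P1_lim a b Rt) at_top
       \<and> ((\<lambda>gD. gD * (P1 M h a b Rt gD - P1_lim a b Rt)) \<longlongrightarrow> M1_hat a b Rt) at_top"
proof -
  define k where "k = (2 powr Rt - 1) * (1 + 1 / a)"
  define c where "c = 1 + a / b * 2 powr Rt"
  have "0 < c"
    unfolding c_def using assms by (simp add: add_pos_pos)
  have "\<forall>\<^sub>F g in at_top. P1 M h a b Rt g = 1 - exp (- k / g) / c"
    using eventually_gt_at_top[of 0]
    by eventually_elim (simp only: P1_closed_form[OF assms(1-4) _ assms(5,6)] k_def c_def)
  from exp_neg_div_expansion_at_top[OF _ this] \<open>0 < c\<close> show ?thesis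
    by (simp add: P1_lim_def M1_hat_def k_def c_def)
qed

end
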